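(* Let $(D,D_{t'})$ be a proper pair (in the sense allowing contemporaneous effects) and let $A,C\subseteq V\cup W$ and $B\subseteq V$ be pairwise disjoint. Let $E\subseteq V$ be a tail ancestral set such that $\mathrm{de}_\bullet(B)\cap E=\emptyset$, $E\subseteq C$ and $\mathrm{pa}_\bullet(B)\subseteq E$. If $B$ is $\delta$-separated from $A$ given $C$ in $D$, then for every $0<t\le t'$, $\nu_t^B$ is $d$-separated from $\bar\nu_{t-1}^A$ given $\bar\nu_{t-1}^{B\cup C}\cup\nu_t^E$ in $D_{t'}$.
   Context: $V$, $W$ are finite disjoint sets ($W$ = baseline nodes). Tailed directed graph: graph on $V\cup W$ with directed edges $i\to j$ and tailed directed edges $i\bullet\!\!\to j$; $i\ast\!\!\to j$ means $i\to j$ or $i\bullet\!\!\to j$. Only baseline nodes have edges into baseline nodes, and these are tailed. $D^-$ is the DG with $i\to j$ iff $i\ast\!\!\to j$ in $D$. $\mathrm{de}_\bullet(B)$: nodes $k$ reachable by a directed path of tailed edges only starting in $B$; $\mathrm{pa}_\bullet(B)$: nodes $k$ with $k\bullet\!\!\to j$, $j\in B$; these sets exclude $B$. A set $E\subseteq V$ is tail ancestral if there are no $i\in V\setminus E$, $j\in E$ with $i\bullet\!\!\to j$. DG terminology: path = walk without repeated nodes; collider = non-endpoint node with both adjacent edges pointing into it; $\mathrm{an}(C)$ = nodes with a directed path into $C$. $\delta$-separation in a DG $G$: with $G^B$ obtained by deleting all edges $i\to j$ with $i\in B$, $B$ is $\delta$-separated from $A$ given $C$ if every path in $G^B$ between $A$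 and $B$ contains a noncollider in $C$ or a collider not in $\mathrm{an}_G(C)\cup C$. In a tailed directed graph $D$, $\delta$-separation means $\delta$-separation in $D^-$. $d$-separation in a DAG: same blocking condition on paths of the DAG, with no edge deletion. Unrolling: the unrolled version of $D$ on $t'$ lags is the DAG $D_{t'}$ on nodes $V^{t'}=\bigcup_{i\in V}\{\nu_0^i,\dots,\nu_{t'}^i\}$ and $W^{t'}=\{\nu_0^i:i\in W\}$, with $\nu_s^i\to\nu_t^j$ if $s<t$ and $i\ast\!\!\to j$, and $\nu_t^i\to\nu_t^j$ if $i\bullet\!\!\to j$. Rolling: the rolled version of a DAG $D_{t'}$ on such a node set is the tailed directed graph with $i\ast\!\!\to j$ if $\nu_s^i\to\nu_t^j$ for some $s\le t$, and $i\bullet\!\!\to j$ iff $\nu_t^i\to\nu_t^j$ for some $t$. Standing assumption: if $\nu_t^i\to\nu_t^j$ is present then so is $\nu_s^i\to\nu_u^j$ for some $s<u$. $(D,D_{t'})$ is proper if $D$ is the rolled version of $D_{t'}$ or $D_{t'}$ is the unrolled version of $D$. Notation: $\nu_t^A=\{\nu_t^i:i\in A\}$, $\bar\nu_t^A=\{\nu_s^i:i\in A, s\le t\}$ (for baseline $i$, only $\nu_0^i$). *)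

theory Defs
  imports Main
begin

text \<open>A tailed directed graph on node set V \<union> W is given by its set of directed
 edges i \<rightarrow> j (dedges) and its set of tailed directed edges i \<bullet>\<rightarrow> j (tedges).\<close>

record 'a tdg =
  dedges :: "('a \<times> 'a) set"
  tedges :: "('a \<times> 'a) set"

text \<open>i *\<rightarrow> j : i \<rightarrow> j or i \<bullet>\<rightarrow> j. This is also the edge set of the DG D^-.\<close>
definition star_edges :: "'a tdg \<Rightarrow> ('a \<times> 'a) set" where
  "star_edges D = dedges D \<union> tedges D"

definition is_tdg :: "'a set \<Rightarrow> 'a set \<Rightarrow> 'a tdg \<Rightarrow> bool" where
  "is_tdg V W D \<longleftrightarrow> finite V \<and> finite W \<and> V \<inter> W = {} \<and>
     star_edges D \<subseteq> (V \<union> W) \<times> (V \<union> W) \<and>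
     (\<forall>i j. (i, j) \<in> star_edges D \<and> j \<in> W \<longrightarrow>
        i \<in> W \<and> (i, j) \<in> tedges D \<and> (i, j) \<notin> dedges D)"

definition tail_de :: "'a tdg \<Rightarrow> 'a set \<Rightarrow> 'a set" where
  "tail_de D B = {k. \<exists>b\<in>B. (b, k) \<in> (tedges D)\<^sup>+} - B"

definition tail_pa :: "'a tdg \<Rightarrow> 'a set \<Rightarrow> 'a set" where
  "tail_pa D B = {k. \<exists>j\<in>B. (k, j) \<in> tedges D} - B"

definition tail_ancestral :: "'a set \<Rightarrow> 'a tdg \<Rightarrow> 'a set \<Rightarrow> bool" where
  "tail_ancestral V D E \<longleftrightarrow> E \<subseteq> V \<and>
     \<not> (\<exists>i\<in>V - E. \<exists>j\<in>E. (i, j) \<in> tedges D)"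

definition is_path :: "('n \<times> 'n) set \<Rightarrow> 'n list \<Rightarrow> bool list \<Rightarrow> bool" where
  "is_path G xs ds \<longleftrightarrow> xs \<noteq> [] \<and> distinct xs \<and> length ds = length xs - 1 \<and>
     (\<forall>k < length ds. if ds ! k then (xs ! k, xs ! Suc k) \<in> G
                                 else (xs ! Suc k, xs ! k) \<in> G)"

text \<open>Position k (a non-endpoint, 0 < k < length xs - 1) is a collider if both
 adjacent edges point into xs!k.\<close>
definition is_collider :: "bool list \<Rightarrow> nat \<Rightarrow> bool" where
  "is_collider ds k \<longleftrightarrow> 0 < k \<and> k < length ds \<and> ds ! (k - 1) \<and> \<not> ds ! k"

definition is_noncollider :: "bool list \<Rightarrow> nat \<Rightarrow> bool" where
  "is_noncollider ds k \<longleftrightarrow> 0 < k \<and> k < length ds \<and> \<not> is_collider ds k"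

definition anc :: "('n \<times> 'n) set \<Rightarrow> 'n set \<Rightarrow> 'n set" where
  "anc G C = {k. \<exists>c\<in>C. (k, c) \<in> G\<^sup>+}"

definition path_blocked :: "('n \<times> 'n) set \<Rightarrow> 'n set \<Rightarrow> 'n list \<Rightarrow> bool list \<Rightarrow> bool" where
  "path_blocked G C xs ds \<longleftrightarrow>
     (\<exists>k. (is_noncollider ds k \<and> xs ! k \<in> C) \<or>
          (is_collider ds k \<and> xs ! k \<notin> anc G C \<union> C))"

definition sep_gen :: "('n \<times> 'n) set \<Rightarrow> ('n \<times> 'n) set \<Rightarrow> 'n set \<Rightarrow> 'n set \<Rightarrow> 'n set \<Rightarrow> bool" where
  "sep_gen G Gp A B C \<longleftrightarrow>
     (\<forall>xs ds. is_path Gp xs ds \<and> hd xs \<in> A \<and> last xs \<in> B \<longrightarrow> path_blocked G C xs ds)"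

definition delta_sep :: "('n \<times> 'n) set \<Rightarrow> 'n set \<Rightarrow> 'n set \<Rightarrow> 'n set \<Rightarrow> bool" where
  "delta_sep G A B C \<longleftrightarrow> sep_gen G {(i, j) \<in> G. i \<notin> B} A B C"

definition d_sep :: "('n \<times> 'n) set \<Rightarrow> 'n set \<Rightarrow> 'n set \<Rightarrow> 'n set \<Rightarrow> bool" where
  "d_sep G A B C \<longleftrightarrow> sep_gen G G A B C"

definition tdg_delta_sep :: "'a tdg \<Rightarrow> 'a set \<Rightarrow> 'a set \<Rightarrow> 'a set \<Rightarrow> bool" where
  "tdg_delta_sep D A B C \<longleftrightarrow> delta_sep (star_edges D) A B C"

section \<open>Unrolled DAGs; node \<nu>_s^i is the pair (i, s)\<close>

definition unrolled_nodes :: "'a set \<Rightarrow> 'a set \<Rightarrow> nat \<Rightarrow> ('a \<times> nat) set" where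
  "unrolled_nodes V W t' = {(i, s). i \<in> V \<and> s \<le> t'} \<union> {(i, 0) | i. i \<in> W}"

definition unroll :: "'a set \<Rightarrow> 'a set \<Rightarrow> nat \<Rightarrow> 'a tdg \<Rightarrow> (('a \<times> nat) \<times> ('a \<times> nat)) set" where
  "unroll V W t' D = {((i, s), (j, t)).
      (i, s) \<in> unrolled_nodes V W t' \<and> (j, t) \<in> unrolled_nodes V W t' \<and>
      ((s < t \<and> (i, j) \<in> star_edges D) \<or> (s = t \<and> (i, j) \<in> tedges D))}"

definition is_rolled :: "'a tdg \<Rightarrow> (('a \<times> nat) \<times> ('a \<times> nat)) set \<Rightarrow> bool" where
  "is_rolled D G \<longleftrightarrow>
     star_edges D = {(i, j). \<exists>s t. s \<le> t \<and> ((i, s), (j, t)) \<in> G} \<and>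
     tedges D = {(i, j). \<exists>t. ((i, t), (j, t)) \<in> G}"

text \<open>G is a DAG on the unrolled node set, all edges go forward in time (s \<le> t),
 and the standing assumption holds (for non-baseline targets).\<close>
definition is_unrolled_dag :: "'a set \<Rightarrow> 'a set \<Rightarrow> nat \<Rightarrow> (('a \<times> nat) \<times> ('a \<times> nat)) set \<Rightarrow> bool" where
  "is_unrolled_dag V W t' G \<longleftrightarrow>
     G \<subseteq> unrolled_nodes V W t' \<times> unrolled_nodes V W t' \<and> acyclic G \<and>
     (\<forall>i s j t. ((i, s), (j, t)) \<in> G \<longrightarrow> s \<le> t) \<and>
     (\<forall>i j t. ((i, t), (j, t)) \<in> G \<and> j \<in> V \<longrightarrow>
        (\<exists>s u. s < u \<and> ((i, s), (j, u)) \<in> G))"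

definition proper_pair :: "'a set \<Rightarrow> 'a set \<Rightarrow> nat \<Rightarrow> 'a tdg \<Rightarrow> (('a \<times> nat) \<times> ('a \<times> nat)) set \<Rightarrow> bool" where
  "proper_pair V W t' D G \<longleftrightarrow> is_tdg V W D \<and> is_unrolled_dag V W t' G \<and>
     (is_rolled D G \<or> G = unroll V W t' D)"

definition nu :: "nat \<Rightarrow> 'a set \<Rightarrow> ('a \<times> nat) set" where
  "nu t A = {(i, t) | i. i \<in> A}"

definition nu_bar :: "'a set \<Rightarrow> nat \<Rightarrow> 'a set \<Rightarrow> ('a \<times> nat) set" where
  "nu_bar W t A = {(i, s) | i s. i \<in> A \<and> i \<notin> W \<and> s \<le> t} \<union> {(i, 0) | i. i \<in> A \<and> i \<in> W}"

end

theory Submission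
  imports Defs
begin

text \<open>Suppose a walk in the unrolled DAG from \<open>nu_bar W (t - 1) A\<close> to \<open>nu t B\<close> were
d-connecting given \<open>Z = nu_bar W (t - 1) (B \<union> C) \<union> nu t E\<close>. Every node of the walk is an
ancestor of an endpoint or of a collider, so it lives at time at most \<open>t\<close>; and a node at time
\<open>t\<close> that is an ancestor of a collider can reach it only through contemporaneous, i.e. tailed,
edges, so it lies in \<open>E\<close> because \<open>E\<close> is tail ancestral. Hence the walk enters its first
\<open>B\<close>-node by an edge pointing into that node, and its noncolliders before that node are not in
\<open>C\<close>. Rolling up the walk up to its first \<open>B\<close>-node therefore gives a walk in \<open>D\<^sup>-\<close> that
uses no edge out of \<open>B\<close>; at the first collider that is not an ancestor of \<open>C\<close> in \<open>D\<close> we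
continue instead along the rolled-up directed path from that collider into \<open>Z\<close>, which must end
in \<open>B\<close>. The resulting walk is \<open>\<delta>\<close>-connecting given \<open>C\<close>, and cutting out its loops yields a
path, contradicting the \<open>\<delta>\<close>-separation of \<open>B\<close> from \<open>A\<close> given \<open>C\<close>.\<close>

section \<open>Walks, colliders and blocking\<close>

definition is_walk :: "('n \<times> 'n) set \<Rightarrow> 'n list \<Rightarrow> bool list \<Rightarrow> bool" where
  "is_walk G xs ds \<longleftrightarrow> xs \<noteq> [] \<and> length ds = length xs - 1 \<and>
     (\<forall>k < length ds. if ds ! k then (xs ! k, xs ! Suc k) \<in> G
                                 else (xs ! Suc k, xs ! k) \<in> G)"

lemma is_path_iff_is_walk_distinct: "is_path G xs ds \<longleftrightarrow> is_walk G xs ds \<and> distinct xs"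
  unfolding is_path_def is_walk_def by auto

lemma is_walk_length: "is_walk G xs ds \<Longrightarrow> length xs = Suc (length ds)"
  unfolding is_walk_def by auto

lemma is_walk_edge:
  "is_walk G xs ds \<Longrightarrow> k < length ds \<Longrightarrow>
     if ds ! k then (xs ! k, xs ! Suc k) \<in> G else (xs ! Suc k, xs ! k) \<in> G"
  unfolding is_walk_def by auto

lemma walk_forward_trancl:
  assumes "is_walk G xs ds" "i < p" "p \<le> length ds" "\<forall>l. i \<le> l \<and> l < p \<longrightarrow> ds ! l"
  shows "(xs ! i, xs ! p) \<in> G\<^sup>+"
  using assms(2-4)
proof (induction p)
  case (Suc p)
  have "(xs ! p, xs ! Suc p) \<in> G" using is_walk_edge[OF assms(1), of p] Suc.prems by auto
  then show ?case using Suc by (cases "i = p") auto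
qed simp

lemma walk_backward_trancl:
  assumes "is_walk G xs ds" "i < p" "p \<le> length ds" "\<forall>l. i \<le> l \<and> l < p \<longrightarrow> \<not> ds ! l"
  shows "(xs ! p, xs ! i) \<in> G\<^sup>+"
  using assms(2-4)
proof (induction p)
  case (Suc p)
  have "(xs ! Suc p, xs ! p) \<in> G" using is_walk_edge[OF assms(1), of p] Suc.prems by auto
  then show ?case using Suc by (cases "i = p") (auto intro: trancl_into_trancl2)
qed simp

lemma walk_forward_to_collider:
  assumes walk: "is_walk G xs ds" and "ds ! i" "\<not> ds ! j" "i < j" "j < length ds"
  obtains p where "i < p" "p \<le> j" "is_collider ds p" "(xs ! i, xs ! p) \<in> G\<^sup>+"
proof -
  let ?P = "\<lambda>p. i < p \<and> \<not> ds ! p"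
  define p where "p = (LEAST p. ?P p)"
  have "?P p" using LeastI[of ?P j] assms(3,4) unfolding p_def by blast
  moreover have "p \<le> j" unfolding p_def using assms(3,4) by (simp add: Least_le)
  moreover have forward: "\<forall>l. i \<le> l \<and> l < p \<longrightarrow> ds ! l"
  proof (intro allI impI)
    fix l assume "i \<le> l \<and> l < p"
    then show "ds ! l" using assms(2) not_less_Least[of l ?P] unfolding p_def[symmetric]
      by (cases "l = i") auto
  qed
  moreover have "i \<le> p - 1 \<and> p - 1 < p" using \<open>?P p\<close> by linarith
  ultimately have "is_collider ds p" using assms(5) forward unfolding is_collider_def by auto
  with that show thesis
    using \<open>?P p\<close> \<open>p \<le> j\<close> walk_forward_trancl[OF walk _ _ forward] assms(5) by auto
qed

lemma walk_forward_to_collider_or_end: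
  assumes walk: "is_walk G xs ds" and "ds ! k" "k < length ds"
  shows "(xs ! k, xs ! length ds) \<in> G\<^sup>+ \<or>
         (\<exists>p. k < p \<and> p < length ds \<and> is_collider ds p \<and> (xs ! k, xs ! p) \<in> G\<^sup>+)"
proof (cases "\<exists>j. k < j \<and> j < length ds \<and> \<not> ds ! j")
  case True
  then obtain j where "k < j" "j < length ds" "\<not> ds ! j" by blast
  with walk_forward_to_collider[OF walk \<open>ds ! k\<close>] show ?thesis by (metis le_less_trans)
next
  case False
  then have "\<forall>l. k \<le> l \<and> l < length ds \<longrightarrow> ds ! l" using \<open>ds ! k\<close> le_neq_implies_less by blast
  then show ?thesis using walk_forward_trancl[OF walk] \<open>k < length ds\<close> by blast
qed

lemma walk_backward_to_collider_or_start:
  assumes walk: "is_walk G xs ds" and "0 < k" "k \<le> length ds" "\<not> ds ! (k - 1)"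
  shows "(xs ! k, xs ! 0) \<in> G\<^sup>+ \<or>
         (\<exists>p. 0 < p \<and> p < k \<and> is_collider ds p \<and> (xs ! k, xs ! p) \<in> G\<^sup>+)"
proof -
  let ?P = "\<lambda>p. \<forall>l. p \<le> l \<and> l < k \<longrightarrow> \<not> ds ! l"
  define p where "p = (LEAST p. ?P p)"
  have "?P (k - 1)"
  proof (intro allI impI)
    fix l assume "k - 1 \<le> l \<and> l < k"
    then have "l = k - 1" by linarith
    then show "\<not> ds ! l" using assms(4) by simp
  qed
  then have backward: "?P p" and "p < k"
    using LeastI[of ?P "k - 1"] Least_le[of ?P "k - 1"] \<open>0 < k\<close> unfolding p_def[symmetric]
    by auto
  show ?thesis
  proof (cases "p = 0")
    case True
    then show ?thesis using walk_backward_trancl[OF walk \<open>0 < k\<close> assms(3)] backward by simp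
  next
    case False
    then have "\<not> ?P (p - 1)" using not_less_Least[of "p - 1" ?P] unfolding p_def[symmetric] by simp
    then obtain l where "p - 1 \<le> l" "l < k" "ds ! l" by blast
    moreover have "\<not> p \<le> l" using backward \<open>l < k\<close> \<open>ds ! l\<close> by blast
    ultimately have "l = p - 1" by linarith
    with \<open>ds ! l\<close> have "ds ! (p - 1)" by simp
    then have "is_collider ds p" using backward \<open>p < k\<close> assms(3) False unfolding is_collider_def by auto
    then show ?thesis using walk_backward_trancl[OF walk _ assms(3) backward] \<open>p < k\<close> False by blast
  qed
qed

lemma walk_reaches_endpoint_or_collider:
  assumes walk: "is_walk G xs ds" and "k \<le> length ds"
  obtains p where "p = 0 \<or> p = length ds \<or> is_collider ds p" "(xs ! k, xs ! p) \<in> G\<^sup>*"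
proof -
  consider "k < length ds" "ds ! k" | "0 < k" "\<not> ds ! (k - 1)"
    | "k = 0 \<or> k = length ds \<or> is_collider ds k"
    using assms(2) unfolding is_collider_def by linarith
  then show thesis
  proof cases
    case 1
    with walk_forward_to_collider_or_end[OF walk 1(2,1)] show ?thesis
      by (metis that trancl_into_rtrancl)
  next
    case 2
    with walk_backward_to_collider_or_start[OF walk 2(1) assms(2) 2(2)] show ?thesis
      by (metis that trancl_into_rtrancl)
  next
    case 3
    then show ?thesis using that[of k] by blast
  qed
qed

lemma is_walk_take:
  "is_walk G xs ds \<Longrightarrow> n < length xs \<Longrightarrow> is_walk G (take (Suc n) xs) (take n ds)"
  unfolding is_walk_def by auto

lemma is_walk_drop:
  "is_walk G xs ds \<Longrightarrow> n < length xs \<Longrightarrow> is_walk G (drop n xs) (drop n ds)"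
  unfolding is_walk_def by (auto simp: add.commute)

lemma is_walk_append:
  assumes "is_walk G xs ds" "is_walk G ys es" "last xs = hd ys"
  shows "is_walk G (butlast xs @ ys) (ds @ es)"
proof -
  have len: "length xs = Suc (length ds)" "length ys = Suc (length es)"
    using assms(1,2) by (auto dest: is_walk_length)
  have node: "(butlast xs @ ys) ! k = (if k < length ds then xs ! k else ys ! (k - length ds))"
    if "k \<le> length ds + length es" for k
    using len by (auto simp: nth_append nth_butlast)
  have junction: "ys ! 0 = xs ! length ds"
    using assms(3) len by (metis hd_conv_nth last_conv_nth diff_Suc_1 list.size(3) nat.distinct(1))
  show ?thesis unfolding is_walk_def
  proof (intro conjI allI impI)
    fix k assume k: "k < length (ds @ es)"
    show "if (ds @ es) ! k then ((butlast xs @ ys) ! k, (butlast xs @ ys) ! Suc k) \<in> G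
          else ((butlast xs @ ys) ! Suc k, (butlast xs @ ys) ! k) \<in> G"
    proof (cases "k < length ds")
      case True
      then show ?thesis using is_walk_edge[OF assms(1) True] k node[of k] node[of "Suc k"] junction
        by (cases "Suc k = length ds") (auto simp: nth_append)
    next
      case False
      then have "k - length ds < length es" "Suc k - length ds = Suc (k - length ds)" using k by auto
      then show ?thesis using is_walk_edge[OF assms(2)] k node[of k] node[of "Suc k"] False
        by (auto simp: nth_append)
    qed
  qed (use len in auto)
qed

lemma is_collider_take: "is_collider (take n ds) k \<longleftrightarrow> is_collider ds k \<and> k < n"
  unfolding is_collider_def by auto

lemma is_noncollider_take: "is_noncollider (take n ds) k \<longleftrightarrow> is_noncollider ds k \<and> k < n"
  unfolding is_noncollider_def is_collider_def by auto

lemma is_collider_drop: "is_collider (drop n ds) k \<longleftrightarrow> is_collider ds (n + k) \<and> 0 < k"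
  unfolding is_collider_def by (cases k) auto

lemma is_noncollider_drop: "is_noncollider (drop n ds) k \<longleftrightarrow> is_noncollider ds (n + k) \<and> 0 < k"
  unfolding is_noncollider_def is_collider_def by (cases k) auto

lemma not_path_blocked_take:
  assumes "\<not> path_blocked G C xs ds"
  shows "\<not> path_blocked G C (take (Suc n) xs) (take n ds)"
  using assms unfolding path_blocked_def is_collider_take is_noncollider_take by auto

lemma not_path_blocked_drop:
  assumes "\<not> path_blocked G C xs ds" "length xs = Suc (length ds)"
  shows "\<not> path_blocked G C (drop n xs) (drop n ds)"
proof
  assume "path_blocked G C (drop n xs) (drop n ds)"
  then obtain k where k: "(is_noncollider (drop n ds) k \<and> drop n xs ! k \<in> C) \<or>
      (is_collider (drop n ds) k \<and> drop n xs ! k \<notin> anc G C \<union> C)"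
    unfolding path_blocked_def by blast
  then have "n + k < length ds" unfolding is_noncollider_def is_collider_def by auto
  then have "drop n xs ! k = xs ! (n + k)" using assms(2) by simp
  with k have "path_blocked G C xs ds"
    unfolding path_blocked_def is_collider_drop is_noncollider_drop by auto
  with assms(1) show False ..
qed

lemma not_path_blocked_append:
  assumes "\<not> path_blocked G C xs ds" "\<not> path_blocked G C ys es"
    and "length xs = Suc (length ds)" "length ys = Suc (length es)" "last xs = hd ys"
    and junction: "ds \<noteq> [] \<Longrightarrow> es \<noteq> [] \<Longrightarrow>
      (if last ds \<and> \<not> hd es then hd ys \<in> anc G C \<union> C else hd ys \<notin> C)"
  shows "\<not> path_blocked G C (butlast xs @ ys) (ds @ es)"
proof
  let ?n = "length ds"
  assume "path_blocked G C (butlast xs @ ys) (ds @ es)"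
  then obtain k where k: "(is_noncollider (ds @ es) k \<and> (butlast xs @ ys) ! k \<in> C) \<or>
      (is_collider (ds @ es) k \<and> (butlast xs @ ys) ! k \<notin> anc G C \<union> C)"
    unfolding path_blocked_def by blast
  have inner: "0 < k" "k < ?n + length es"
    using k unfolding is_noncollider_def is_collider_def by auto
  consider "k < ?n" | "k = ?n" | "?n < k" by linarith
  then show False
  proof cases
    case 1
    then have "(butlast xs @ ys) ! k = take (Suc ?n) xs ! k"
      using assms(3) by (simp add: nth_append nth_butlast)
    with k 1 have "path_blocked G C (take (Suc ?n) xs) (take ?n (ds @ es))"
      unfolding path_blocked_def is_collider_take is_noncollider_take by auto
    then show False using assms(1,3) by simp
  next
    case 2
    have "ys \<noteq> []" using assms(4) by auto
    with 2 have "ds \<noteq> []" "es \<noteq> []" "(ds @ es) ! (k - 1) = last ds" "(ds @ es) ! k = hd es"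
      "(butlast xs @ ys) ! k = hd ys"
      using inner assms(3,4) by (auto simp: nth_append last_conv_nth hd_conv_nth)
    then show False using junction k unfolding is_noncollider_def is_collider_def
      by (auto split: if_splits)
  next
    case 3
    define j where "j = k - ?n"
    have kj: "k = ?n + j" "0 < j" using 3 unfolding j_def by auto
    have "is_collider es j = is_collider (ds @ es) k"
      "is_noncollider es j = is_noncollider (ds @ es) k"
      using is_collider_drop[of ?n "ds @ es" j] is_noncollider_drop[of ?n "ds @ es" j] kj by auto
    moreover have "(butlast xs @ ys) ! k = ys ! j" using kj assms(3) by (simp add: nth_append)
    ultimately have "path_blocked G C ys es" using k unfolding path_blocked_def by auto
    then show False using assms(2) by simp
  qed
qed

lemma loop_junction_unblocked:
  assumes walk: "is_walk Gp xs ds" and "Gp \<subseteq> G" and unbl: "\<not> path_blocked G C xs ds"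
    and "0 < i" "i < j" "j < length ds" "xs ! i = xs ! j"
  shows "if ds ! (i - 1) \<and> \<not> ds ! j then xs ! j \<in> anc G C \<union> C else xs ! j \<notin> C"
proof -
  have at_node: "(is_noncollider ds k \<longrightarrow> xs ! k \<notin> C) \<and>
      (is_collider ds k \<longrightarrow> xs ! k \<in> anc G C \<union> C)" for k
    using unbl unfolding path_blocked_def by blast
  show ?thesis
  proof (cases "ds ! (i - 1) \<and> \<not> ds ! j")
    case junction: True
    show ?thesis
    proof (cases "is_collider ds i \<or> is_collider ds j")
      case True
      then show ?thesis using junction at_node[of i] at_node[of j] assms(7) by auto
    next
      case False
      \<comment> \<open>The walk leaves \<open>xs ! i\<close> forwards and enters \<open>xs ! j\<close> backwards, so between the two
         copies of the node lies a collider, of which \<open>xs ! i\<close> is an ancestor.\<close>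
      then have "ds ! i" "\<not> ds ! (j - 1)"
        using junction assms(4-6) unfolding is_collider_def by auto
      moreover from this have "i < j - 1" using assms(5) by (cases "i = j - 1") auto
      ultimately obtain p where "is_collider ds p" "(xs ! i, xs ! p) \<in> Gp\<^sup>+"
        using walk_forward_to_collider[OF walk] assms(6) by (metis less_imp_diff_less)
      moreover from this have "(xs ! i, xs ! p) \<in> G\<^sup>+" using assms(2) trancl_mono by blast
      ultimately have "xs ! i \<in> anc G C" using at_node[of p] unfolding anc_def
        by (auto intro: trancl_trans)
      then show ?thesis using junction assms(7) by simp
    qed
  next
    case False
    then have "is_noncollider ds i \<or> is_noncollider ds j"
      using assms(4-6) unfolding is_noncollider_def is_collider_def by auto
    then show ?thesis using False at_node[of i] at_node[of j] assms(7) by auto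
  qed
qed

lemma walk_remove_loop:
  assumes walk: "is_walk Gp xs ds" and "Gp \<subseteq> G" and unbl: "\<not> path_blocked G C xs ds"
    and "i < j" "j < length xs" "xs ! i = xs ! j"
  shows "is_walk Gp (take i xs @ drop j xs) (take i ds @ drop j ds)"
    and "\<not> path_blocked G C (take i xs @ drop j xs) (take i ds @ drop j ds)"
proof -
  have len: "length xs = Suc (length ds)" using walk by (rule is_walk_length)
  have "last (take (Suc i) xs) = xs ! i" using assms(4,5) by (simp add: take_Suc_conv_app_nth)
  then have prefix: "butlast (take (Suc i) xs) = take i xs" "last (take (Suc i) xs) = hd (drop j xs)"
    using assms(4-6) by (auto simp: butlast_take hd_drop_conv_nth)
  show "is_walk Gp (take i xs @ drop j xs) (take i ds @ drop j ds)"
    using is_walk_append[OF is_walk_take[OF walk, of i] is_walk_drop[OF walk, of j]] prefix assms(4,5)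
    by simp
  have junction: "if last (take i ds) \<and> \<not> hd (drop j ds) then hd (drop j xs) \<in> anc G C \<union> C
      else hd (drop j xs) \<notin> C"
    if "take i ds \<noteq> []" "drop j ds \<noteq> []"
  proof -
    have "0 < i" "j < length ds" using that by auto
    moreover from this have "take i ds = take (i - 1) ds @ [ds ! (i - 1)]"
      using take_Suc_conv_app_nth[of "i - 1" ds] assms(4) by simp
    then have "last (take i ds) = ds ! (i - 1)" by simp
    moreover have "hd (drop j ds) = ds ! j" "hd (drop j xs) = xs ! j"
      using \<open>j < length ds\<close> assms(5) by (auto simp: hd_drop_conv_nth)
    ultimately show ?thesis
      using loop_junction_unblocked[OF walk assms(2) unbl _ assms(4) _ assms(6)]
      by (auto split: if_splits)
  qed
  have "length (take (Suc i) xs) = Suc (length (take i ds))"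
    "length (drop j xs) = Suc (length (drop j ds))"
    using assms(4,5) len by auto
  from not_path_blocked_append[OF not_path_blocked_take[OF unbl, of i]
      not_path_blocked_drop[OF unbl len, of j] this prefix(2) junction] prefix(1)
  show "\<not> path_blocked G C (take i xs @ drop j xs) (take i ds @ drop j ds)" by simp
qed

lemma unblocked_walk_imp_unblocked_path:
  assumes "is_walk Gp xs ds" "Gp \<subseteq> G" "\<not> path_blocked G C xs ds"
  shows "\<exists>xs' ds'. is_path Gp xs' ds' \<and> \<not> path_blocked G C xs' ds' \<and>
           hd xs' = hd xs \<and> last xs' = last xs"
  using assms
proof (induction "length xs" arbitrary: xs ds rule: less_induct)
  case less
  show ?case
  proof (cases "distinct xs")
    case True
    then show ?thesis using less.prems by (auto simp: is_path_iff_is_walk_distinct)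
  next
    case False
    then obtain i j where ij: "i < j" "j < length xs" "xs ! i = xs ! j"
      by (metis distinct_conv_nth linorder_neqE_nat)
    let ?xs = "take i xs @ drop j xs"
    have "xs \<noteq> []" using ij by auto
    then have hd: "hd ?xs = hd xs"
      using ij by (cases "i = 0") (simp_all add: hd_drop_conv_nth hd_conv_nth nth_append)
    have last: "last ?xs = last xs" using ij by simp
    have "length ?xs < length xs" using ij by simp
    from less.hyps[OF this walk_remove_loop(1)[OF less.prems ij] less.prems(2)
        walk_remove_loop(2)[OF less.prems ij]]
    obtain xs' ds' where "is_path Gp xs' ds'" "\<not> path_blocked G C xs' ds'"
      "hd xs' = hd ?xs" "last xs' = last ?xs"
      by blast
    with hd last show ?thesis by metis
  qed
qed

lemma trancl_imp_directed_walk: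
  assumes "(x, y) \<in> R\<^sup>+"
  shows "\<exists>ws. is_walk R ws (replicate (length ws - 1) True) \<and> hd ws = x \<and> last ws = y"
  using assms
proof (induction rule: converse_trancl_induct)
  case (base x)
  then show ?case by (intro exI[of _ "[x, y]"]) (simp add: is_walk_def)
next
  case (step x z)
  then obtain ws where ws: "is_walk R ws (replicate (length ws - 1) True)" "hd ws = z" "last ws = y"
    by blast
  have "is_walk R (x # ws) (replicate (length (x # ws) - 1) True)"
    unfolding is_walk_def
  proof (intro conjI allI impI)
    fix k assume k: "k < length (replicate (length (x # ws) - 1) True)"
    show "if replicate (length (x # ws) - 1) True ! k then ((x # ws) ! k, (x # ws) ! Suc k) \<in> R
          else ((x # ws) ! Suc k, (x # ws) ! k) \<in> R"
    proof (cases k)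
      case 0
      then show ?thesis using step(1) ws(1,2) by (simp add: is_walk_def hd_conv_nth)
    next
      case (Suc l)
      then show ?thesis using is_walk_edge[OF ws(1), of l] k by simp
    qed
  qed simp_all
  then show ?case using ws by (intro exI[of _ "x # ws"]) (auto simp: is_walk_def)
qed

lemma anc_mono: "R \<subseteq> S \<Longrightarrow> anc R C \<subseteq> anc S C"
  unfolding anc_def using trancl_mono by blast

lemma directed_walk_not_blocked:
  assumes walk: "is_walk R ws (replicate (length ws - 1) True)" and "hd ws \<notin> anc R C"
  shows "\<not> path_blocked G C ws (replicate (length ws - 1) True)"
proof -
  have "ws ! k \<notin> C" if "0 < k" "Suc k < length ws" for k
  proof
    assume "ws ! k \<in> C"
    moreover have "(ws ! 0, ws ! k) \<in> R\<^sup>+" using walk_forward_trancl[OF walk] that by simp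
    moreover have "hd ws = ws ! 0" using that by (cases ws) auto
    ultimately show False using assms(2) unfolding anc_def by auto
  qed
  then show ?thesis unfolding path_blocked_def is_noncollider_def is_collider_def by auto
qed

lemma trancl_enters_set:
  assumes "(x, y) \<in> R\<^sup>+" "y \<in> B" "x \<notin> B"
  shows "\<exists>b\<in>B. (x, b) \<in> {(i, j) \<in> R. i \<notin> B}\<^sup>+"
  using assms
proof (induction rule: converse_trancl_induct)
  case (base x)
  then show ?case by blast
next
  case (step x z)
  show ?case
  proof (cases "z \<in> B")
    case True
    then show ?thesis using step(1,5) by blast
  next
    case False
    then obtain b where "b \<in> B" "(z, b) \<in> {(i, j) \<in> R. i \<notin> B}\<^sup>+" using step.IH step(4) by blast
    moreover have "(x, z) \<in> {(i, j) \<in> R. i \<notin> B}" using step(1,5) by simp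
    ultimately show ?thesis by (blast intro: trancl_into_trancl2)
  qed
qed

section \<open>The unrolled graph\<close>

locale proper_unrolling =
  fixes V W :: "'a set" and t' :: nat and D :: "'a tdg"
    and G :: "(('a \<times> nat) \<times> ('a \<times> nat)) set"
  assumes proper: "proper_pair V W t' D G"
begin

lemma unrolled_edge:
  assumes "(a, b) \<in> G"
  shows "snd a \<le> snd b" and "(fst a, fst b) \<in> star_edges D"
    and "snd a = snd b \<Longrightarrow> (fst a, fst b) \<in> tedges D"
    and "a \<in> unrolled_nodes V W t'" and "b \<in> unrolled_nodes V W t'"
proof -
  obtain i s j u where ab: "a = (i, s)" "b = (j, u)" by (cases a, cases b)
  have "is_unrolled_dag V W t' G" and rolled: "is_rolled D G \<or> G = unroll V W t' D"
    using proper unfolding proper_pair_def by auto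
  then show "snd a \<le> snd b" "a \<in> unrolled_nodes V W t'" "b \<in> unrolled_nodes V W t'"
    using assms ab unfolding is_unrolled_dag_def by auto
  have "(i, j) \<in> star_edges D \<and> (s = u \<longrightarrow> (i, j) \<in> tedges D)"
    using rolled
  proof
    assume "is_rolled D G"
    then show ?thesis using assms ab \<open>snd a \<le> snd b\<close> unfolding is_rolled_def by auto
  next
    assume "G = unroll V W t' D"
    then show ?thesis using assms ab unfolding unroll_def star_edges_def by auto
  qed
  then show "(fst a, fst b) \<in> star_edges D" "snd a = snd b \<Longrightarrow> (fst a, fst b) \<in> tedges D"
    using ab by auto
qed

lemma unrolled_node_in_V: "a \<in> unrolled_nodes V W t' \<Longrightarrow> 0 < snd a \<Longrightarrow> fst a \<in> V"
  unfolding unrolled_nodes_def by auto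

lemma unrolled_baseline_node_time: "a \<in> unrolled_nodes V W t' \<Longrightarrow> fst a \<in> W \<Longrightarrow> snd a = 0"
  using proper unfolding proper_pair_def is_tdg_def unrolled_nodes_def by auto

lemma unrolled_trancl_time_mono: "(a, b) \<in> G\<^sup>+ \<Longrightarrow> snd a \<le> snd b"
  by (induction rule: trancl_induct) (auto dest: unrolled_edge(1))

lemma unrolled_rtrancl_time_mono: "(a, b) \<in> G\<^sup>* \<Longrightarrow> snd a \<le> snd b"
  by (auto simp: rtrancl_eq_or_trancl dest: unrolled_trancl_time_mono)

lemma unrolled_trancl_rolls: "(a, b) \<in> G\<^sup>+ \<Longrightarrow> (fst a, fst b) \<in> (star_edges D)\<^sup>+"
  by (induction rule: trancl_induct) (auto dest: unrolled_edge(2) intro: trancl_into_trancl)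

lemma tail_ancestral_edge:
  assumes "tail_ancestral V D E" "(a, b) \<in> G" "snd a = snd b" "0 < snd b" "fst b \<in> E"
  shows "fst a \<in> E"
  using assms unrolled_edge[OF assms(2)] unrolled_node_in_V[of a]
  unfolding tail_ancestral_def by auto

lemma tail_ancestral_trancl:
  assumes "tail_ancestral V D E" "(a, b) \<in> G\<^sup>+" "snd a = snd b" "0 < snd b" "fst b \<in> E"
  shows "fst a \<in> E"
  using assms(2-5)
proof (induction rule: converse_trancl_induct)
  case (base a)
  then show ?case using tail_ancestral_edge[OF assms(1)] by blast
next
  case (step a y)
  have "snd a \<le> snd y" "snd y \<le> snd b"
    using unrolled_edge(1)[OF step(1)] unrolled_trancl_time_mono[OF step(2)] by auto
  then have "snd a = snd y" "snd y = snd b" using step(4) by auto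
  then show ?case using step tail_ancestral_edge[OF assms(1) step(1)] by auto
qed

end

section \<open>An unblocked walk in the unrolled graph\<close>

locale unblocked_unrolled_walk = proper_unrolling +
  fixes A B C E :: "'a set" and t :: nat
    and xs :: "('a \<times> nat) list" and ds :: "bool list"
  assumes AB: "A \<inter> B = {}" and BC: "B \<inter> C = {}"
    and E_tail_ancestral: "tail_ancestral V D E" and E_C: "E \<subseteq> C"
    and tail_pa_E: "tail_pa D B \<subseteq> E"
    and t_pos: "0 < t"
    and walk: "is_walk G xs ds"
    and starts_in_A: "hd xs \<in> nu_bar W (t - 1) A" and ends_in_B: "last xs \<in> nu t B"
    and unblocked: "\<not> path_blocked G (nu_bar W (t - 1) (B \<union> C) \<union> nu t E) xs ds"
begin

abbreviation Z where "Z \<equiv> nu_bar W (t - 1) (B \<union> C) \<union> nu t E"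

lemma length_xs: "length xs = Suc (length ds)"
  using walk by (rule is_walk_length)

lemma xs_nonempty: "xs \<noteq> []"
  using length_xs by auto

lemma first_node: "fst (xs ! 0) \<in> A" "snd (xs ! 0) < t"
proof -
  have "xs ! 0 \<in> nu_bar W (t - 1) A" using starts_in_A xs_nonempty by (simp add: hd_conv_nth)
  then show "fst (xs ! 0) \<in> A" "snd (xs ! 0) < t" using t_pos unfolding nu_bar_def by auto
qed

lemma last_node: "fst (xs ! length ds) \<in> B" "snd (xs ! length ds) = t"
proof -
  have "xs ! length ds \<in> nu t B" using ends_in_B xs_nonempty length_xs by (simp add: last_conv_nth)
  then show "fst (xs ! length ds) \<in> B" "snd (xs ! length ds) = t" unfolding nu_def by auto
qed

lemma walk_node: "k \<le> length ds \<Longrightarrow> xs ! k \<in> unrolled_nodes V W t'"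
proof -
  assume "k \<le> length ds"
  moreover have "0 < length ds" using first_node(1) last_node(1) AB by (cases ds) auto
  ultimately obtain l where "l < length ds" "k = l \<or> k = Suc l"
    by (cases "k = 0") (auto intro: that[of "k - 1"] that[of k])
  then show ?thesis
    using is_walk_edge[OF walk, of l] unrolled_edge(4,5)[of "xs ! l" "xs ! Suc l"]
      unrolled_edge(4,5)[of "xs ! Suc l" "xs ! l"]
    by (cases "ds ! l") auto
qed

lemma Z_memberD: "z \<in> Z \<Longrightarrow> snd z \<le> t \<and> fst z \<in> B \<union> C \<and> (snd z = t \<longrightarrow> fst z \<in> E)"
  unfolding nu_bar_def nu_def using t_pos E_C by auto

lemma in_Z_before_t:
  assumes "a \<in> unrolled_nodes V W t'" "fst a \<in> B \<union> C" "snd a < t"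
  shows "a \<in> Z"
  using assms unrolled_baseline_node_time[OF assms(1)]
  unfolding nu_bar_def by (cases a) auto

lemma in_Z_at_t: "snd a = t \<Longrightarrow> fst a \<in> E \<Longrightarrow> a \<in> Z"
  unfolding nu_def by (cases a) auto

lemma noncollider_not_in_Z: "is_noncollider ds k \<Longrightarrow> xs ! k \<notin> Z"
  using unblocked unfolding path_blocked_def by blast

lemma collider_in_anc_Z: "is_collider ds k \<Longrightarrow> xs ! k \<in> anc G Z \<union> Z"
  using unblocked unfolding path_blocked_def by blast

lemma collider_time_le:
  assumes "is_collider ds k"
  shows "snd (xs ! k) \<le> t"
proof (cases "xs ! k \<in> Z")
  case False
  then obtain z where "z \<in> Z" "(xs ! k, z) \<in> G\<^sup>+"
    using collider_in_anc_Z[OF assms] unfolding anc_def by blast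
  then have "snd (xs ! k) \<le> snd z" "snd z \<le> t" using unrolled_trancl_time_mono Z_memberD by auto
  then show ?thesis by simp
qed (use Z_memberD in blast)

lemma walk_time_le: "k \<le> length ds \<Longrightarrow> snd (xs ! k) \<le> t"
proof -
  assume "k \<le> length ds"
  then obtain p where p: "p = 0 \<or> p = length ds \<or> is_collider ds p" "(xs ! k, xs ! p) \<in> G\<^sup>*"
    using walk_reaches_endpoint_or_collider[OF walk] by blast
  have "snd (xs ! p) \<le> t" using p(1) first_node(2) last_node(2) collider_time_le by auto
  then show ?thesis using unrolled_rtrancl_time_mono[OF p(2)] by simp
qed

lemma collider_at_t_in_E:
  assumes "is_collider ds p" "snd (xs ! p) = t"
  shows "fst (xs ! p) \<in> E"
proof (cases "xs ! p \<in> Z")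
  case False
  then obtain z where z: "z \<in> Z" "(xs ! p, z) \<in> G\<^sup>+"
    using collider_in_anc_Z[OF assms(1)] unfolding anc_def by blast
  have "t \<le> snd z" using unrolled_trancl_time_mono[OF z(2)] assms(2) by simp
  then have "snd z = t" using Z_memberD[OF z(1)] by simp
  then show ?thesis
    using z Z_memberD tail_ancestral_trancl[OF E_tail_ancestral z(2)] assms(2) t_pos by simp
qed (use assms(2) Z_memberD in blast)

lemma ancestor_of_collider_at_t_in_E:
  assumes "(xs ! k, xs ! p) \<in> G\<^sup>+" "is_collider ds p" "snd (xs ! k) = t"
  shows "fst (xs ! k) \<in> E"
proof -
  have "snd (xs ! p) = t"
    using unrolled_trancl_time_mono[OF assms(1)] collider_time_le[OF assms(2)] assms(3) by simp
  then show ?thesis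
    using tail_ancestral_trancl[OF E_tail_ancestral assms(1)] collider_at_t_in_E[OF assms(2)]
      assms(3) t_pos by simp
qed

lemma backward_edge_at_t_in_E:
  assumes "0 < k" "k \<le> length ds" "\<not> ds ! (k - 1)" "snd (xs ! k) = t"
  shows "fst (xs ! k) \<in> E"
  using walk_backward_to_collider_or_start[OF walk assms(1-3)]
proof
  assume "(xs ! k, xs ! 0) \<in> G\<^sup>+"
  from unrolled_trancl_time_mono[OF this] show ?thesis using first_node(2) assms(4) by simp
qed (use ancestor_of_collider_at_t_in_E assms(4) in blast)

lemma off_Z_at_t:
  assumes "k \<le> length ds" "xs ! k \<notin> Z" "fst (xs ! k) \<in> B \<union> C"
  shows "snd (xs ! k) = t"
proof -
  have "\<not> snd (xs ! k) < t" using in_Z_before_t[OF walk_node] assms by blast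
  then show ?thesis using walk_time_le[OF assms(1)] by simp
qed

definition first_B :: nat where "first_B = (LEAST k. fst (xs ! k) \<in> B)"

lemma first_B: "fst (xs ! first_B) \<in> B" "first_B \<le> length ds" "0 < first_B"
  and before_first_B: "k < first_B \<Longrightarrow> fst (xs ! k) \<notin> B"
proof -
  show "fst (xs ! first_B) \<in> B"
    unfolding first_B_def by (rule LeastI[of "\<lambda>k. fst (xs ! k) \<in> B", OF last_node(1)])
  show "first_B \<le> length ds"
    unfolding first_B_def by (rule Least_le[of "\<lambda>k. fst (xs ! k) \<in> B", OF last_node(1)])
  show "k < first_B \<Longrightarrow> fst (xs ! k) \<notin> B" unfolding first_B_def by (rule not_less_Least)
  show "0 < first_B"
    using \<open>fst (xs ! first_B) \<in> B\<close> first_node(1) AB by (cases first_B) auto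
qed

lemma first_B_entered_forward: "ds ! (first_B - 1)"
proof (rule ccontr)
  assume backward: "\<not> ds ! (first_B - 1)"
  have "snd (xs ! first_B) = t"
  proof (cases "first_B = length ds")
    case False
    then have "is_noncollider ds first_B"
      using backward first_B unfolding is_noncollider_def is_collider_def by auto
    then show ?thesis using off_Z_at_t first_B noncollider_not_in_Z by blast
  qed (use last_node in simp)
  then have "fst (xs ! first_B) \<in> E" using backward_edge_at_t_in_E first_B backward by blast
  then show False using first_B(1) E_C BC by blast
qed

lemma forward_run_into_first_B:
  assumes "k < first_B" "snd (xs ! k) = t" "\<forall>l. k \<le> l \<and> l < first_B \<longrightarrow> ds ! l"
  shows "fst (xs ! (first_B - 1)) \<in> E" "snd (xs ! (first_B - 1)) = t"
proof -
  let ?j = "first_B - 1"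
  have edge: "(xs ! ?j, xs ! first_B) \<in> G"
    using is_walk_edge[OF walk, of ?j] first_B_entered_forward first_B by simp
  have "(xs ! k, xs ! ?j) \<in> G\<^sup>*"
  proof (cases "k = ?j")
    case False
    then have "k < ?j" "?j \<le> length ds" using assms(1) first_B(2) by auto
    moreover have "\<forall>l. k \<le> l \<and> l < ?j \<longrightarrow> ds ! l" using assms(3) by auto
    ultimately have "(xs ! k, xs ! ?j) \<in> G\<^sup>+" by (rule walk_forward_trancl[OF walk])
    then show ?thesis by simp
  qed simp
  from unrolled_rtrancl_time_mono[OF this] have "t \<le> snd (xs ! ?j)" using assms(2) by simp
  moreover have "snd (xs ! ?j) \<le> snd (xs ! first_B)" "snd (xs ! first_B) \<le> t"
    using unrolled_edge(1)[OF edge] walk_time_le first_B by auto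
  ultimately show "snd (xs ! ?j) = t" by simp
  then have "(fst (xs ! ?j), fst (xs ! first_B)) \<in> tedges D"
    using unrolled_edge(3)[OF edge] \<open>snd (xs ! first_B) \<le> t\<close> \<open>t \<le> snd (xs ! ?j)\<close>
      \<open>snd (xs ! ?j) \<le> snd (xs ! first_B)\<close> by simp
  then have "fst (xs ! ?j) \<in> tail_pa D B"
    using first_B before_first_B[of ?j] unfolding tail_pa_def by auto
  then show "fst (xs ! ?j) \<in> E" using tail_pa_E by blast
qed

lemma forward_edge_before_first_B_in_E:
  assumes "k < first_B" "ds ! k" "snd (xs ! k) = t"
  shows "fst (xs ! k) \<in> E"
proof (cases "\<exists>j. k < j \<and> j < first_B \<and> \<not> ds ! j")
  case True
  then obtain j where j: "k < j" "j < first_B" "\<not> ds ! j" by blast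
  then have "j < length ds" using first_B(2) by simp
  with walk_forward_to_collider[OF walk assms(2) j(3,1)]
  obtain p where "is_collider ds p" "(xs ! k, xs ! p) \<in> G\<^sup>+" .
  then show ?thesis using ancestor_of_collider_at_t_in_E assms(3) by blast
next
  case False
  have forward: "\<forall>l. k \<le> l \<and> l < first_B \<longrightarrow> ds ! l"
  proof (intro allI impI)
    fix l assume "k \<le> l \<and> l < first_B"
    then show "ds ! l" using assms(2) False by (cases "l = k") auto
  qed
  note run = forward_run_into_first_B[OF assms(1,3) forward]
  show ?thesis
  proof (rule ccontr)
    assume "fst (xs ! k) \<notin> E"
    then have "first_B - 1 \<noteq> k" using run(1) by auto
    then have "is_noncollider ds (first_B - 1)"
      using forward assms(1) first_B(2) unfolding is_noncollider_def is_collider_def by auto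
    from noncollider_not_in_Z[OF this] show False using in_Z_at_t[OF run(2,1)] by contradiction
  qed
qed

lemma noncollider_before_first_B_not_in_C:
  assumes "k < first_B" "is_noncollider ds k"
  shows "fst (xs ! k) \<notin> C"
proof
  assume "fst (xs ! k) \<in> C"
  have "k < length ds" "0 < k" using assms(2) unfolding is_noncollider_def by auto
  have "xs ! k \<notin> Z" using noncollider_not_in_Z[OF assms(2)] .
  then have at_t: "snd (xs ! k) = t" using off_Z_at_t \<open>k < length ds\<close> \<open>fst (xs ! k) \<in> C\<close> by simp
  consider "\<not> ds ! (k - 1)" | "ds ! k"
    using assms(2) unfolding is_noncollider_def is_collider_def by auto
  then have "fst (xs ! k) \<in> E"
  proof cases
    case 1
    then show ?thesis using backward_edge_at_t_in_E \<open>0 < k\<close> \<open>k < length ds\<close> at_t by simp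
  next
    case 2
    then show ?thesis using forward_edge_before_first_B_in_E assms(1) at_t by blast
  qed
  then have "xs ! k \<in> Z" by (rule in_Z_at_t[OF at_t])
  with \<open>xs ! k \<notin> Z\<close> show False by contradiction
qed

abbreviation cut_edges :: "('a \<times> 'a) set" where
  "cut_edges \<equiv> {(i, j) \<in> star_edges D. i \<notin> B}"

lemma collider_outside_anc_C_reaches_B:
  assumes "k < first_B" "is_collider ds k" "fst (xs ! k) \<notin> anc (star_edges D) C \<union> C"
  shows "\<exists>b\<in>B. (fst (xs ! k), b) \<in> cut_edges\<^sup>+"
proof -
  have "fst (xs ! k) \<notin> B" using before_first_B[OF assms(1)] .
  then have "xs ! k \<notin> Z" using Z_memberD assms(3) by blast
  then obtain z where z: "z \<in> Z" "(xs ! k, z) \<in> G\<^sup>+"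
    using collider_in_anc_Z[OF assms(2)] unfolding anc_def by blast
  have rolled: "(fst (xs ! k), fst z) \<in> (star_edges D)\<^sup>+" using unrolled_trancl_rolls[OF z(2)] .
  then have "fst z \<notin> C" using assms(3) unfolding anc_def by blast
  then have "fst z \<in> B" using Z_memberD[OF z(1)] by blast
  then show ?thesis using trancl_enters_set[OF rolled] \<open>fst (xs ! k) \<notin> B\<close> by blast
qed

lemma projected_prefix:
  assumes "0 < K" "K \<le> first_B"
    and good: "\<forall>k. k < K \<and> is_collider ds k \<longrightarrow> fst (xs ! k) \<in> anc (star_edges D) C \<union> C"
  shows "is_walk cut_edges (map fst (take (Suc K) xs)) (take K ds)"
    and "\<not> path_blocked (star_edges D) C (map fst (take (Suc K) xs)) (take K ds)"
    and "hd (map fst (take (Suc K) xs)) \<in> A"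
    and "last (map fst (take (Suc K) xs)) = fst (xs ! K)"
proof -
  have K: "K \<le> length ds" using first_B(2) assms(2) by simp
  have node: "map fst (take (Suc K) xs) ! k = fst (xs ! k)" if "k \<le> K" for k
    using that K length_xs by simp
  show "hd (map fst (take (Suc K) xs)) \<in> A"
    using first_node(1) xs_nonempty by (simp add: hd_map hd_conv_nth)
  show "last (map fst (take (Suc K) xs)) = fst (xs ! K)"
    using K length_xs by (simp add: last_map take_Suc_conv_app_nth)
  show "is_walk cut_edges (map fst (take (Suc K) xs)) (take K ds)"
    unfolding is_walk_def
  proof (intro conjI allI impI)
    fix k assume "k < length (take K ds)"
    then have k: "k < K" "k < length ds" using K by auto
    show "if take K ds ! k
      then (map fst (take (Suc K) xs) ! k, map fst (take (Suc K) xs) ! Suc k) \<in> cut_edges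
      else (map fst (take (Suc K) xs) ! Suc k, map fst (take (Suc K) xs) ! k) \<in> cut_edges"
    proof (cases "ds ! k")
      case True
      then have "(xs ! k, xs ! Suc k) \<in> G" using is_walk_edge[OF walk k(2)] by simp
      then show ?thesis
        using unrolled_edge(2) before_first_B[of k] k assms(2) node[of k] node[of "Suc k"] True
        by simp
    next
      case False
      then have "Suc k \<noteq> first_B" using first_B_entered_forward by (metis diff_Suc_1)
      then have "Suc k < first_B" using k assms(2) by simp
      moreover have "(xs ! Suc k, xs ! k) \<in> G" using is_walk_edge[OF walk k(2)] False by simp
      ultimately show ?thesis
        using unrolled_edge(2) before_first_B[of "Suc k"] k node[of k] node[of "Suc k"] False
        by simp
    qed
  qed (use K length_xs in auto)
  show "\<not> path_blocked (star_edges D) C (map fst (take (Suc K) xs)) (take K ds)"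
  proof
    assume "path_blocked (star_edges D) C (map fst (take (Suc K) xs)) (take K ds)"
    then obtain k where "k < K"
      and k: "(is_noncollider ds k \<and> fst (xs ! k) \<in> C) \<or>
        (is_collider ds k \<and> fst (xs ! k) \<notin> anc (star_edges D) C \<union> C)"
      unfolding path_blocked_def is_collider_take is_noncollider_take using node by fastforce
    then show False
      using good noncollider_before_first_B_not_in_C[of k] assms(2) by auto
  qed
qed

lemma detour_at_collider:
  assumes "0 < K" "K < first_B" "is_collider ds K" "fst (xs ! K) \<notin> anc (star_edges D) C \<union> C"
    and good: "\<forall>k. k < K \<and> is_collider ds k \<longrightarrow> fst (xs ! k) \<in> anc (star_edges D) C \<union> C"
  shows "\<exists>ys es. is_walk cut_edges ys es \<and> \<not> path_blocked (star_edges D) C ys es \<and>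
     hd ys \<in> A \<and> last ys \<in> B"
proof -
  let ?prefix = "map fst (take (Suc K) xs)"
  note prefix = projected_prefix[OF assms(1) less_imp_le[OF assms(2)] good]
  obtain b where "b \<in> B" "(fst (xs ! K), b) \<in> cut_edges\<^sup>+"
    using collider_outside_anc_C_reaches_B[OF assms(2-4)] by blast
  from trancl_imp_directed_walk[OF this(2)]
  obtain ws where ws: "is_walk cut_edges ws (replicate (length ws - 1) True)"
    "hd ws = fst (xs ! K)" "last ws = b"
    by blast
  have "hd ws \<notin> anc cut_edges C"
  proof
    assume "hd ws \<in> anc cut_edges C"
    moreover have "anc cut_edges C \<subseteq> anc (star_edges D) C" by (rule anc_mono) blast
    ultimately have "hd ws \<in> anc (star_edges D) C" by (rule rev_subsetD)
    then show False using ws(2) assms(4) by simp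
  qed
  note detour_unblocked = directed_walk_not_blocked[OF ws(1) this, of "star_edges D"]
  have lengths: "length ?prefix = Suc (length (take K ds))"
    "length ws = Suc (length (replicate (length ws - 1) True))"
    using assms(2) first_B(2) length_xs is_walk_length[OF ws(1)] by simp_all
  let ?ys = "butlast ?prefix @ ws" and ?es = "take K ds @ replicate (length ws - 1) True"
  have "is_walk cut_edges ?ys ?es"
    using is_walk_append[OF prefix(1) ws(1)] prefix(4) ws(2) by simp
  moreover have "\<not> path_blocked (star_edges D) C ?ys ?es"
  proof (rule not_path_blocked_append[OF prefix(2) detour_unblocked lengths])
    show "last ?prefix = hd ws" using prefix(4) ws(2) by simp
    show "if last (take K ds) \<and> \<not> hd (replicate (length ws - 1) True)
        then hd ws \<in> anc (star_edges D) C \<union> C else hd ws \<notin> C"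
      if "take K ds \<noteq> []" "replicate (length ws - 1) True \<noteq> []"
      using that ws(2) assms(4) by simp
  qed
  moreover have "hd ?ys \<in> A"
  proof -
    have "length (butlast ?prefix) = K" using lengths(1) assms(2) first_B(2) by simp
    then have "butlast ?prefix \<noteq> []" using assms(1) by (metis length_0_conv less_not_refl)
    moreover from this have "hd (butlast ?prefix) = hd ?prefix"
      by (metis append_butlast_last_id butlast.simps(1) hd_append2)
    ultimately show ?thesis using prefix(3) by simp
  qed
  moreover have "last ?ys \<in> B" using ws(1,3) \<open>b \<in> B\<close> by (simp add: is_walk_def)
  ultimately show ?thesis by blast
qed

lemma delta_connecting_walk:
  "\<exists>ys es. is_walk cut_edges ys es \<and> \<not> path_blocked (star_edges D) C ys es \<and>
     hd ys \<in> A \<and> last ys \<in> B"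
proof -
  define bad where "bad k \<longleftrightarrow> k < first_B \<and> is_collider ds k \<and>
    fst (xs ! k) \<notin> anc (star_edges D) C \<union> C" for k
  show ?thesis
  proof (cases "\<exists>k. bad k")
    case False
    then have "\<forall>k. k < first_B \<and> is_collider ds k \<longrightarrow> fst (xs ! k) \<in> anc (star_edges D) C \<union> C"
      unfolding bad_def by blast
    note prefix = projected_prefix[OF first_B(3) order.refl this]
    have "last (map fst (take (Suc first_B) xs)) \<in> B" using prefix(4) first_B(1) by simp
    then show ?thesis using prefix(1-3) by blast
  next
    case True
    define K where "K = (LEAST k. bad k)"
    have "bad K" unfolding K_def using True by (rule LeastI_ex)
    then have K: "K < first_B" "is_collider ds K" "fst (xs ! K) \<notin> anc (star_edges D) C \<union> C"
      and "0 < K" unfolding bad_def is_collider_def by auto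
    have "\<forall>k. k < K \<and> is_collider ds k \<longrightarrow> fst (xs ! k) \<in> anc (star_edges D) C \<union> C"
    proof (intro allI impI)
      fix k assume k: "k < K \<and> is_collider ds k"
      then have "\<not> bad k" using not_less_Least[of k bad] unfolding K_def by blast
      then show "fst (xs ! k) \<in> anc (star_edges D) C \<union> C" using k K(1) unfolding bad_def by auto
    qed
    then show ?thesis using detour_at_collider[OF \<open>0 < K\<close> K] by blast
  qed
qed

end

theorem lemma1:
  fixes V W :: "'a set" and D :: "'a tdg" and G :: "(('a \<times> nat) \<times> ('a \<times> nat)) set"
    and t' :: nat and A B C E :: "'a set"
  assumes proper: "proper_pair V W t' D G"
    and A_sub: "A \<subseteq> V \<union> W" and C_sub: "C \<subseteq> V \<union> W" and B_sub: "B \<subseteq> V"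
    and disj: "A \<inter> B = {}" "A \<inter> C = {}" "B \<inter> C = {}"
    and E_ta: "tail_ancestral V D E"
    and E_de: "tail_de D B \<inter> E = {}"
    and E_C: "E \<subseteq> C"
    and E_pa: "tail_pa D B \<subseteq> E"
    and sep: "tdg_delta_sep D A B C"
  shows "\<forall>t. 0 < t \<and> t \<le> t' \<longrightarrow>
           d_sep G (nu_bar W (t - 1) A) (nu t B) (nu_bar W (t - 1) (B \<union> C) \<union> nu t E)"
proof (intro allI impI)
  fix t assume t: "0 < t \<and> t \<le> t'"
  let ?Z = "nu_bar W (t - 1) (B \<union> C) \<union> nu t E"
  show "d_sep G (nu_bar W (t - 1) A) (nu t B) ?Z"
    unfolding d_sep_def sep_gen_def
  proof (intro allI impI)
    fix xs ds
    assume path: "is_path G xs ds \<and> hd xs \<in> nu_bar W (t - 1) A \<and> last xs \<in> nu t B"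
    show "path_blocked G ?Z xs ds"
    proof (rule ccontr)
      assume "\<not> path_blocked G ?Z xs ds"
      then interpret unblocked_unrolled_walk V W t' D G A B C E t xs ds
        using proper disj(1,3) E_ta E_C E_pa t path
        by unfold_locales (auto simp: is_path_iff_is_walk_distinct)
      obtain ys es where walk: "is_walk cut_edges ys es"
        and unblocked: "\<not> path_blocked (star_edges D) C ys es" and "hd ys \<in> A" "last ys \<in> B"
        using delta_connecting_walk by blast
      have "cut_edges \<subseteq> star_edges D" by blast
      from unblocked_walk_imp_unblocked_path[OF walk this unblocked]
      obtain ys' es' where "is_path cut_edges ys' es'" "\<not> path_blocked (star_edges D) C ys' es'"
        "hd ys' \<in> A" "last ys' \<in> B"
        using \<open>hd ys \<in> A\<close> \<open>last ys \<in> B\<close> by auto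
      then show False using sep unfolding tdg_delta_sep_def delta_sep_def sep_gen_def by blast
    qed
  qed
qed

end
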